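(* Let $\mathcal{U}\subset\mathbb{R}^n\times\mathbb{R}^p$ be open, $\mathcal{D}\subset\mathcal{U}$ nonempty, $\Gamma:\mathcal{D}\times\mathbb{R}^m\rightrightarrows\mathbb{R}^q$ with $\Gamma(\xi,\cdot)$ positively homogeneous for all $\xi\in\mathcal{D}$, and $\mathcal{A}:\mathcal{U}\to\mathbb{R}^{q\times m}$. Suppose that $\Gamma$ is polyhedral. Then $\Gamma$ is outer semicontinuous, and for every $\bar\xi\in\mathcal{D}$, with $H:=\Gamma(\bar\xi,\cdot)$, $\mathcal{Z}:=\mathrm{bd}\,\mathbb{B}\cap\mathrm{dom}\,H$ and $\mathcal{Z}_0:=\{z\in\mathcal{Z}\mid 0\in\mathcal{A}(\bar\xi)z+H(z)\}$, the following hold: the set $\mathcal{A}(\bar\xi)\,\mathrm{dom}\,H$ is closed; and there exists $c\ge0$ such that for every $z\in\mathcal{Z}_0$ there are $\varepsilon,\delta>0$ with \[\Gamma(\xi,z')\cap\delta\mathbb{B}\subset\Gamma(\bar\xi,z')+c\|\xi-\bar\xi\|\mathbb{B}\quad\text{whenever }(\xi,z')\in(\mathcal{D}\times\mathrm{bd}\,\mathbb{B})\cap((\bar\xi,z)+\varepsilon\mathbb{B}).\]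
   Context: $\mathbb{B}$ is the closed unit ball and $\mathrm{bd}$ the boundary. A set-valued map $H$ is positively homogeneous if $H(\gamma z)=\gamma H(z)$ for all $\gamma>0$. $\Gamma$ is polyhedral if its graph $\{(\xi,z,\eta)\mid\eta\in\Gamma(\xi,z)\}$ is a finite union of convex polyhedra. $\Gamma$ is outer semicontinuous if $\limsup_{(\xi',z')\to(\xi,z)}\Gamma(\xi',z')\subset\Gamma(\xi,z)$ (Painlevé–Kuratowski) for all $(\xi,z)\in\mathcal{D}\times\mathbb{R}^m$. *)

theory Defs
  imports "HOL-Analysis.Analysis"
begin

definition graph_sv :: "'x set \<Rightarrow> ('x \<Rightarrow> 'z \<Rightarrow> 'w set) \<Rightarrow> ('x \<times> 'z \<times> 'w) set" where
  "graph_sv D \<Gamma> = {(\<xi>, z, \<eta>). \<xi> \<in> D \<and> \<eta> \<in> \<Gamma> \<xi> z}"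

definition polyhedral_sv :: "('x::euclidean_space) set \<Rightarrow> ('x \<Rightarrow> ('z::euclidean_space) \<Rightarrow> ('w::euclidean_space) set) \<Rightarrow> bool" where
  "polyhedral_sv D \<Gamma> \<longleftrightarrow> (\<exists>F. finite F \<and> (\<forall>P\<in>F. polyhedron P) \<and> graph_sv D \<Gamma> = \<Union>F)"

definition dom_sv :: "('z \<Rightarrow> 'w set) \<Rightarrow> 'z set" where
  "dom_sv H = {z. H z \<noteq> {}}"

definition outer_semicontinuous_sv :: "('x::metric_space) set \<Rightarrow> ('x \<Rightarrow> ('z::metric_space) \<Rightarrow> ('w::metric_space) set) \<Rightarrow> bool" where
  "outer_semicontinuous_sv D \<Gamma> \<longleftrightarrow>
     (\<forall>\<xi>\<in>D. \<forall>z \<eta>. (\<exists>xs zs ys. (\<forall>k. xs k \<in> D \<and> ys k \<in> \<Gamma> (xs k) (zs k)) \<and>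
          xs \<longlonglongrightarrow> \<xi> \<and> zs \<longlonglongrightarrow> z \<and> ys \<longlonglongrightarrow> \<eta>) \<longrightarrow> \<eta> \<in> \<Gamma> \<xi> z)"

end

theory Submission
  imports Defs
begin

text \<open>
  A polyhedral graph is a finite union of closed convex sets, which gives outer semicontinuity
  at once. Closedness of \<open>A(\<xi>) dom H\<close> reduces to closedness of linear images of polyhedra:
  if the minimal-norm preimages of a bounded set of images escaped to infinity along a direction
  \<open>u\<close>, then \<open>u\<close> would be a recession direction of the polyhedron in the kernel of the map, and
  subtracting it would shorten a minimal preimage.

  For the local estimate, the constant \<open>c = 0\<close> works. The projections of the finitely many pieces of the graph are closed, so
  every piece whose projection meets a \<open>\<xi>\<close> close to \<open>\<xi>b\<close> also meets \<open>\<xi>b\<close>. If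
  \<open>\<eta> \<in> \<Gamma>(\<xi>, z)\<close>, homogeneity puts the whole ray \<open>t(\<xi>, z, \<eta>)\<close> into the graph, so one piece
  contains infinitely many of its points and has \<open>(0, z, \<eta>)\<close> as a recession direction. Moving
  from a point of that piece above \<open>\<xi>b\<close> along this direction, rescaling by homogeneity and
  passing to the limit gives \<open>\<eta> \<in> \<Gamma>(\<xi>b, z)\<close>.
\<close>

lemma closed_if_closed_Int_cball:
  fixes S :: "'a::real_normed_vector set"
  assumes "\<And>R. closed (S \<inter> cball 0 R)"
  shows "closed S"
  unfolding closed_sequential_limits
proof (intro allI impI, elim conjE)
  fix x l assume x: "\<forall>n. x n \<in> S" and l: "x \<longlonglongrightarrow> l"
  obtain R where "\<forall>n. norm (x n) \<le> R"
    using convergent_imp_bounded[OF l] by (auto simp: bounded_iff)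
  then have "\<forall>n. x n \<in> S \<inter> cball 0 R"
    using x by simp
  then show "l \<in> S"
    using assms closed_sequentially l by blast
qed

lemma bounded_linear_escaping_eventually_gt:
  fixes f :: "'a::real_normed_vector \<Rightarrow> real"
  assumes f: "bounded_linear f" and X: "filterlim (\<lambda>k. norm (X k)) at_top F"
    and u: "((\<lambda>k. sgn (X k)) \<longlongrightarrow> u) F" and pos: "f u > 0"
  shows "\<forall>\<^sub>F k in F. M < f (X k)"
proof -
  have "f (X k) = f (sgn (X k)) * norm (X k)" for k
    using linear_scale[OF bounded_linear.linear[OF f], of "norm (X k)" "sgn (X k)"]
    by (cases "X k = 0") (simp_all add: sgn_div_norm)
  moreover have "filterlim (\<lambda>k. f (sgn (X k)) * norm (X k)) at_top F"
    using bounded_linear.tendsto[OF f u] pos X by (rule filterlim_tendsto_pos_mult_at_top)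
  ultimately show ?thesis
    by (simp add: filterlim_at_top_dense)
qed

lemma unbounded_escaping_sequence:
  fixes S :: "'a::euclidean_space set"
  assumes "\<not> bounded S"
  obtains X u where "\<And>k. X k \<in> S" "filterlim (\<lambda>k. norm (X k)) at_top sequentially"
    "(\<lambda>k. sgn (X k)) \<longlonglongrightarrow> u" "norm u = 1"
proof -
  have "\<forall>k::nat. \<exists>x\<in>S. real k < norm x"
    using assms by (meson bounded_iff not_le)
  then obtain x where xS: "\<And>k. x k \<in> S" and xk: "\<And>k. real k < norm (x k)"
    by metis
  have "sgn (x k) \<in> sphere 0 1" for k
    using xk[of k] by (auto simp: norm_sgn)
  then obtain u r where u: "u \<in> sphere 0 1" and r: "strict_mono r"
    and lim: "(sgn \<circ> x \<circ> r) \<longlonglongrightarrow> u"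
    using compact_sphere[of "0::'a" 1] unfolding compact_eq_seq_compact_metric seq_compact_def
    by (metis comp_apply)
  have "real k \<le> norm (x (r k))" for k
    using xk[of "r k"] seq_suble[OF r, of k] by linarith
  then have "filterlim (\<lambda>k. norm (x (r k))) at_top sequentially"
    by (intro filterlim_at_top_mono[OF filterlim_real_sequentially]) simp
  then show thesis
    using that[of "x \<circ> r" u] xS lim u by (simp add: o_def)
qed

lemma polyhedron_escaping_sequence_shift:
  fixes X :: "'i \<Rightarrow> 'a::euclidean_space"
  assumes P: "polyhedron P" and XP: "\<And>k. X k \<in> P" and F: "F \<noteq> bot"
    and X: "filterlim (\<lambda>k. norm (X k)) at_top F" and u: "((\<lambda>k. sgn (X k)) \<longlongrightarrow> u) F"
  shows "\<forall>\<^sub>F k in F. X k - u \<in> P"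
proof -
  obtain H where H: "finite H" "P = \<Inter>H" and hs: "\<forall>h\<in>H. \<exists>a b. a \<noteq> 0 \<and> h = {x. a \<bullet> x \<le> b}"
    using P by (auto simp: polyhedron_def)
  have "\<forall>\<^sub>F k in F. X k - u \<in> h" if "h \<in> H" for h
  proof -
    obtain a b where h: "h = {x. a \<bullet> x \<le> b}"
      using hs \<open>h \<in> H\<close> by blast
    have ab: "a \<bullet> X k \<le> b" for k
      using XP[of k] H \<open>h \<in> H\<close> h by blast
    consider "a \<bullet> u > 0" | "a \<bullet> u = 0" | "a \<bullet> u < 0"
      by linarith
    then show ?thesis
    proof cases
      case 1
      then have "\<forall>\<^sub>F k in F. b < a \<bullet> X k"
        using bounded_linear_escaping_eventually_gt[OF bounded_linear_inner_right X u]
        by simp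
      then obtain k where "b < a \<bullet> X k"
        using eventually_happens'[OF F] by blast
      with ab[of k] show ?thesis
        by simp
    next
      case 2
      then show ?thesis
        using ab by (simp add: h inner_diff_right)
    next
      case 3
      then have "\<forall>\<^sub>F k in F. - (b + a \<bullet> u) < - (a \<bullet> X k)"
        using bounded_linear_escaping_eventually_gt[OF bounded_linear_minus[OF bounded_linear_inner_right] X u]
        by simp
      then show ?thesis
        by eventually_elim (simp add: h inner_diff_right)
    qed
  qed
  then show ?thesis
    using H by (simp add: eventually_ball_finite)
qed

lemma bounded_min_norm_preimages:
  fixes L :: "'a::euclidean_space \<Rightarrow> 'b::euclidean_space"
  assumes L: "linear L" and P: "polyhedron P"
  shows "bounded {x\<in>P. norm (L x) \<le> R \<and> (\<forall>x'\<in>P. L x' = L x \<longrightarrow> norm x \<le> norm x')}"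
    (is "bounded ?M")
proof (rule ccontr)
  assume "\<not> bounded ?M"
  then obtain X u where XM: "\<And>k. X k \<in> ?M"
    and X: "filterlim (\<lambda>k. norm (X k)) at_top sequentially"
    and u: "(\<lambda>k. sgn (X k)) \<longlonglongrightarrow> u" "norm u = 1"
    by (rule unbounded_escaping_sequence) blast
  have "L u = 0"
  proof (rule ccontr)
    assume "L u \<noteq> 0"
    then have "\<forall>\<^sub>F k in sequentially. R * norm (L u) < L (X k) \<bullet> L u"
      using L by (intro bounded_linear_escaping_eventually_gt[OF _ X u(1)])
        (simp_all add: bounded_linear_inner_left_comp linear_conv_bounded_linear)
    then obtain k where "R * norm (L u) < L (X k) \<bullet> L u"
      using eventually_happens'[OF sequentially_bot] by blast
    also have "L (X k) \<bullet> L u \<le> norm (L (X k)) * norm (L u)"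
      by (rule norm_cauchy_schwarz)
    also have "\<dots> \<le> R * norm (L u)"
      using XM[of k] by (intro mult_right_mono) auto
    finally show False
      by simp
  qed
  have "\<forall>\<^sub>F k in sequentially. X k - u \<in> P"
    using XM by (intro polyhedron_escaping_sequence_shift[OF P _ _ X u(1)]) auto
  moreover have "\<forall>\<^sub>F k in sequentially. 1/2 < X k \<bullet> u"
    using u(2) by (intro bounded_linear_escaping_eventually_gt[OF bounded_linear_inner_left X u(1)])
      (simp add: dot_square_norm)
  ultimately obtain k where k: "X k - u \<in> P" "1/2 < X k \<bullet> u"
    using eventually_happens'[OF sequentially_bot] eventually_conj by blast
  have "(norm (X k - u))\<^sup>2 = (norm (X k))\<^sup>2 - 2 * (X k \<bullet> u) + (norm u)\<^sup>2"
    by (simp add: power2_norm_eq_inner inner_diff_left inner_diff_right inner_commute)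
  then have "(norm (X k - u))\<^sup>2 < (norm (X k))\<^sup>2"
    using k(2) by (simp only: u(2) power_one)
  then have "norm (X k - u) < norm (X k)"
    by (rule power2_less_imp_less) simp
  moreover have "L (X k - u) = L (X k)"
    using \<open>L u = 0\<close> L by (simp add: linear_diff)
  then have "norm (X k) \<le> norm (X k - u)"
    using XM[of k] k(1) by simp
  ultimately show False
    by linarith
qed

lemma closed_linear_image_polyhedron:
  fixes L :: "'a::euclidean_space \<Rightarrow> 'b::euclidean_space"
  assumes L: "linear L" and P: "polyhedron P"
  shows "closed (L ` P)"
proof (rule closed_if_closed_Int_cball)
  fix R
  define M where "M = {x\<in>P. norm (L x) \<le> R \<and> (\<forall>x'\<in>P. L x' = L x \<longrightarrow> norm x \<le> norm x')}"
  have contL: "continuous_on UNIV L"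
    using L by (simp add: linear_continuous_on linear_conv_bounded_linear)
  have clP: "closed P"
    using P by (rule polyhedron_imp_closed)
  have "L ` P \<inter> cball 0 R \<subseteq> L ` M"
  proof
    fix y assume y: "y \<in> L ` P \<inter> cball 0 R"
    have "closed (P \<inter> L -` {y})"
      using clP contL by (simp add: closed_Int closed_vimage)
    moreover have "P \<inter> L -` {y} \<noteq> {}"
      using y by blast
    ultimately obtain x where x: "x \<in> P \<inter> L -` {y}"
      and min: "\<And>x'. x' \<in> P \<inter> L -` {y} \<Longrightarrow> dist 0 x \<le> dist 0 x'"
      by (rule distance_attains_inf[where a = 0]) blast
    have "x \<in> M"
      using x min y unfolding M_def by auto
    then show "y \<in> L ` M"
      using x by blast
  qed
  also have "\<dots> \<subseteq> L ` closure M"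
    by (intro image_mono closure_subset)
  also have "\<dots> \<subseteq> L ` P \<inter> cball 0 R"
  proof -
    have "closed {x. norm (L x) \<le> R}"
      using contL by (intro closed_Collect_le continuous_on_norm continuous_on_const)
    then have "closure M \<subseteq> P \<inter> {x. norm (L x) \<le> R}"
      using clP by (intro closure_minimal) (auto simp: M_def)
    then show ?thesis
      by auto
  qed
  finally have "L ` P \<inter> cball 0 R = L ` closure M"
    by blast
  moreover have "compact (closure M)"
    using bounded_min_norm_preimages[OF L P] by (simp add: M_def compact_closure)
  ultimately show "closed (L ` P \<inter> cball 0 R)"
    using compact_continuous_image[OF continuous_on_subset[OF contL subset_UNIV]]
    by (simp add: compact_imp_closed)
qed

lemma closed_convex_recession_direction:
  fixes S :: "'a::real_normed_vector set"
  assumes S: "closed S" "convex S" and a: "a \<in> S"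
    and x: "\<forall>\<^sub>F k in F. x k \<in> S" and t: "filterlim t at_top F"
    and d: "((\<lambda>k. x k /\<^sub>R t k) \<longlongrightarrow> d) F" and F: "F \<noteq> bot" and s: "0 \<le> s"
  shows "a + s *\<^sub>R d \<in> S"
proof (rule Lim_in_closed_set[OF S(1) _ F])
  have "\<forall>\<^sub>F k in F. max s 1 \<le> t k"
    using t filterlim_at_top by blast
  with x show "\<forall>\<^sub>F k in F. a + (s / t k) *\<^sub>R (x k - a) \<in> S"
  proof eventually_elim
    case (elim k)
    then have "0 \<le> s / t k" "s / t k \<le> 1"
      using s by simp_all
    then have "(1 - s / t k) *\<^sub>R a + (s / t k) *\<^sub>R x k \<in> S"
      using S(2) a elim(1) unfolding convex_alt by blast
    then show ?case
      by (simp add: algebra_simps)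
  qed
  have "((\<lambda>k. a + s *\<^sub>R (x k /\<^sub>R t k) - (s * inverse (t k)) *\<^sub>R a) \<longlongrightarrow> a + s *\<^sub>R d - (s * 0) *\<^sub>R a) F"
    by (intro tendsto_intros d tendsto_inverse_0_at_top t)
  then show "((\<lambda>k. a + (s / t k) *\<^sub>R (x k - a)) \<longlongrightarrow> a + s *\<^sub>R d) F"
    by (simp add: algebra_simps divide_inverse)
qed

lemma ray_in_finite_Union_recession:
  fixes p d :: "'a::real_normed_vector"
  assumes F: "finite F" "\<And>P. P \<in> F \<Longrightarrow> closed P \<and> convex P"
    and ray: "\<And>k::nat. p + real k *\<^sub>R d \<in> \<Union>F"
  obtains P k where "P \<in> F" "p + real k *\<^sub>R d \<in> P" "\<And>q s. q \<in> P \<Longrightarrow> 0 \<le> s \<Longrightarrow> q + s *\<^sub>R d \<in> P"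
proof -
  have "\<forall>k\<in>UNIV. \<exists>P\<in>F. p + real k *\<^sub>R d \<in> P"
    using ray by blast
  then obtain P where P: "P \<in> F" and "infinite {k \<in> UNIV. p + real k *\<^sub>R d \<in> P}"
    using pigeonhole_infinite_rel[OF infinite_UNIV_nat F(1), of "\<lambda>k P. p + real k *\<^sub>R d \<in> P"]
    by blast
  then obtain r :: "nat \<Rightarrow> nat" where r: "strict_mono r" "\<And>j. p + real (r j) *\<^sub>R d \<in> P"
    using infinite_enumerate by blast
  have t: "filterlim (\<lambda>j. real (r j)) at_top sequentially"
    by (rule filterlim_compose[OF filterlim_real_sequentially filterlim_subseq[OF r(1)]])
  have "((\<lambda>j. inverse (real (r j)) *\<^sub>R p + d) \<longlongrightarrow> 0 *\<^sub>R p + d) sequentially"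
    by (intro tendsto_intros tendsto_inverse_0_at_top t)
  moreover have "\<forall>\<^sub>F j in sequentially. inverse (real (r j)) *\<^sub>R p + d = (p + real (r j) *\<^sub>R d) /\<^sub>R real (r j)"
    using t[unfolded filterlim_at_top_dense, rule_format, of 0]
    by eventually_elim (simp add: algebra_simps)
  ultimately have "((\<lambda>j. (p + real (r j) *\<^sub>R d) /\<^sub>R real (r j)) \<longlongrightarrow> d) sequentially"
    by (simp add: Lim_transform_eventually)
  then have "q + s *\<^sub>R d \<in> P" if "q \<in> P" "0 \<le> s" for q s
    using closed_convex_recession_direction[of P q "\<lambda>j. p + real (r j) *\<^sub>R d"] F(2)[OF P] that r(2) t
    by simp
  then show thesis
    using that P r(2) by blast
qed

lemma recession_direction_mem_closed_cone:
  fixes C :: "'a::real_normed_vector set"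
  assumes C: "closed C" and scale: "\<And>c x. 0 < c \<Longrightarrow> x \<in> C \<Longrightarrow> c *\<^sub>R x \<in> C"
    and q: "\<And>s. 0 < s \<Longrightarrow> q + s *\<^sub>R d \<in> C"
  shows "d \<in> C"
proof (rule Lim_in_closed_set[OF C _ sequentially_bot])
  have "inverse (real (Suc k)) *\<^sub>R (q + real (Suc k) *\<^sub>R d) \<in> C" for k
    using scale q by simp
  then show "\<forall>\<^sub>F k in sequentially. inverse (real (Suc k)) *\<^sub>R q + d \<in> C"
    by (simp add: scaleR_add_right)
  show "(\<lambda>k. inverse (real (Suc k)) *\<^sub>R q + d) \<longlonglongrightarrow> d"
    using tendsto_add[OF tendsto_scaleR[OF LIMSEQ_inverse_real_of_nat tendsto_const] tendsto_const, of q d]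
    by simp
qed

lemma polyhedral_sv_imp_closed_graph:
  assumes "polyhedral_sv D \<Gamma>"
  shows "closed (graph_sv D \<Gamma>)"
proof -
  obtain F where F: "finite F" "\<forall>P\<in>F. polyhedron P" and graph: "graph_sv D \<Gamma> = \<Union>F"
    using assms unfolding polyhedral_sv_def by blast
  have "\<forall>P\<in>F. closed P"
    using F(2) polyhedron_imp_closed by blast
  then show ?thesis
    using F(1) graph by (simp add: closed_Union)
qed

lemma closed_graph_imp_outer_semicontinuous_sv:
  assumes "closed (graph_sv D \<Gamma>)"
  shows "outer_semicontinuous_sv D \<Gamma>"
  unfolding outer_semicontinuous_sv_def
proof (intro ballI allI impI, elim exE conjE)
  fix \<xi> z \<eta> and xs zs ys :: "nat \<Rightarrow> _"
  assume "\<forall>k. xs k \<in> D \<and> ys k \<in> \<Gamma> (xs k) (zs k)" "xs \<longlonglongrightarrow> \<xi>" "zs \<longlonglongrightarrow> z" "ys \<longlonglongrightarrow> \<eta>"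
  then have "\<And>k. (xs k, zs k, ys k) \<in> graph_sv D \<Gamma>" "(\<lambda>k. (xs k, zs k, ys k)) \<longlonglongrightarrow> (\<xi>, z, \<eta>)"
    by (simp_all add: graph_sv_def tendsto_Pair)
  then have "(\<xi>, z, \<eta>) \<in> graph_sv D \<Gamma>"
    by (rule closed_sequentially[OF assms])
  then show "\<eta> \<in> \<Gamma> \<xi> z"
    by (simp add: graph_sv_def)
qed

lemma closed_linear_image_dom_sv:
  fixes \<Gamma> :: "'x::euclidean_space \<Rightarrow> 'z::euclidean_space \<Rightarrow> 'w::euclidean_space set"
    and L :: "'z \<Rightarrow> 'b::euclidean_space"
  assumes "polyhedral_sv D \<Gamma>" and "\<xi> \<in> D" and L: "linear L"
  shows "closed (L ` dom_sv (\<Gamma> \<xi>))"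
proof -
  obtain F where F: "finite F" "\<forall>P\<in>F. polyhedron P" and graph: "graph_sv D \<Gamma> = \<Union>F"
    using assms(1) unfolding polyhedral_sv_def by blast
  define f where "f = (\<lambda>p :: 'x \<times> 'z \<times> 'w. L (fst (snd p)))"
  have "L ` dom_sv (\<Gamma> \<xi>) = f ` (graph_sv D \<Gamma> \<inter> {p. fst p = \<xi>})"
    using \<open>\<xi> \<in> D\<close> by (force simp: f_def dom_sv_def graph_sv_def)
  also have "\<dots> = (\<Union>P\<in>F. f ` (P \<inter> {p. fst p = \<xi>}))"
    by (auto simp: graph)
  finally have image: "L ` dom_sv (\<Gamma> \<xi>) = (\<Union>P\<in>F. f ` (P \<inter> {p. fst p = \<xi>}))" .
  have "linear f"
    unfolding f_def using L
    by (intro linear_compose[OF linear_compose[OF linear_snd linear_fst], unfolded o_def])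
  moreover have "affine {p :: 'x \<times> 'z \<times> 'w. fst p = \<xi>}"
    by (auto simp: affine_def simp flip: scaleR_add_left)
  ultimately have "closed (f ` (P \<inter> {p. fst p = \<xi>}))" if "P \<in> F" for P
    using F(2) that by (simp add: closed_linear_image_polyhedron polyhedron_Int affine_imp_polyhedron)
  then show ?thesis
    unfolding image using F(1) by blast
qed

lemma polyhedral_sv_value_subset:
  fixes \<Gamma> :: "'x::euclidean_space \<Rightarrow> 'z::euclidean_space \<Rightarrow> 'w::euclidean_space set"
  assumes F: "finite F" "\<forall>P\<in>F. polyhedron P" and graph: "graph_sv D \<Gamma> = \<Union>F"
    and hom: "\<forall>\<xi>\<in>D. \<forall>\<gamma>>0. \<forall>z. \<Gamma> \<xi> (\<gamma> *\<^sub>R z) = (\<lambda>\<eta>. \<gamma> *\<^sub>R \<eta>) ` \<Gamma> \<xi> z"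
    and \<xi>: "\<xi> \<in> D" and \<xi>b: "\<xi>b \<in> D"
    and pieces: "\<forall>P\<in>F. \<xi> \<in> fst ` P \<longrightarrow> \<xi>b \<in> fst ` P"
  shows "\<Gamma> \<xi> z \<subseteq> \<Gamma> \<xi>b z"
proof
  fix \<eta> assume \<eta>: "\<eta> \<in> \<Gamma> \<xi> z"
  have "(\<xi>, z, \<eta>) + real k *\<^sub>R (0, z, \<eta>) \<in> \<Union>F" for k :: nat
  proof -
    have "(1 + real k) *\<^sub>R \<eta> \<in> \<Gamma> \<xi> ((1 + real k) *\<^sub>R z)"
      using hom \<xi> \<eta> by auto
    then show ?thesis
      using \<xi> by (simp add: graph[symmetric] graph_sv_def algebra_simps)
  qed
  moreover have "closed P \<and> convex P" if "P \<in> F" for P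
    using F(2) that polyhedron_imp_closed polyhedron_imp_convex by blast
  ultimately obtain P k where P: "P \<in> F" "(\<xi>, z, \<eta>) + real k *\<^sub>R (0, z, \<eta>) \<in> P"
    and recession: "\<And>q s. q \<in> P \<Longrightarrow> 0 \<le> s \<Longrightarrow> q + s *\<^sub>R (0, z, \<eta>) \<in> P"
    using ray_in_finite_Union_recession[OF F(1)] by blast
  have "\<xi> \<in> fst ` P"
    using P(2) by force
  then obtain z0 \<eta>0 where q: "(\<xi>b, z0, \<eta>0) \<in> P"
    using pieces P(1) by force
  define C where "C = {(z', w). w \<in> \<Gamma> \<xi>b z'}"
  have "C = Pair \<xi>b -` graph_sv D \<Gamma>"
    using \<xi>b by (auto simp: C_def graph_sv_def)
  then have "closed C"
    using F graph polyhedron_imp_closed by (auto intro!: continuous_intros)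
  moreover have "c *\<^sub>R x \<in> C" if "0 < c" "x \<in> C" for c x
    using hom \<xi>b that by (auto simp: C_def)
  moreover have "(z0, \<eta>0) + s *\<^sub>R (z, \<eta>) \<in> C" if "0 < s" for s
  proof -
    have "(\<xi>b, z0, \<eta>0) + s *\<^sub>R (0, z, \<eta>) \<in> graph_sv D \<Gamma>"
      using recession[OF q, of s] that P(1) graph by auto
    then show ?thesis
      by (simp add: C_def graph_sv_def)
  qed
  ultimately have "(z, \<eta>) \<in> C"
    by (rule recession_direction_mem_closed_cone)
  then show "\<eta> \<in> \<Gamma> \<xi>b z"
    by (simp add: C_def)
qed

lemma polyhedral_sv_eventually_subset:
  fixes \<Gamma> :: "'x::euclidean_space \<Rightarrow> 'z::euclidean_space \<Rightarrow> 'w::euclidean_space set"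
  assumes poly: "polyhedral_sv D \<Gamma>"
    and hom: "\<forall>\<xi>\<in>D. \<forall>\<gamma>>0. \<forall>z. \<Gamma> \<xi> (\<gamma> *\<^sub>R z) = (\<lambda>\<eta>. \<gamma> *\<^sub>R \<eta>) ` \<Gamma> \<xi> z"
    and \<xi>b: "\<xi>b \<in> D"
  shows "\<forall>\<^sub>F \<xi> in nhds \<xi>b. \<xi> \<in> D \<longrightarrow> (\<forall>z. \<Gamma> \<xi> z \<subseteq> \<Gamma> \<xi>b z)"
proof -
  obtain F where F: "finite F" "\<forall>P\<in>F. polyhedron P" and graph: "graph_sv D \<Gamma> = \<Union>F"
    using poly unfolding polyhedral_sv_def by blast
  define K where "K = (\<Union>P\<in>{P\<in>F. \<xi>b \<notin> fst ` P}. fst ` P)"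
  have "closed K"
    unfolding K_def using F by (intro closed_UN) (auto intro: closed_linear_image_polyhedron[OF linear_fst])
  moreover have "\<xi>b \<notin> K"
    by (simp add: K_def)
  ultimately have "\<forall>\<^sub>F \<xi> in nhds \<xi>b. \<xi> \<in> - K"
    by (intro eventually_nhds_in_open) (simp_all add: open_Compl)
  then show ?thesis
  proof eventually_elim
    case (elim \<xi>)
    then have "\<forall>P\<in>F. \<xi> \<in> fst ` P \<longrightarrow> \<xi>b \<in> fst ` P"
      by (auto simp: K_def)
    then show ?case
      using polyhedral_sv_value_subset[OF F graph hom _ \<xi>b] by blast
  qed
qed

lemma polyhedral_sv_locally_subset:
  fixes \<Gamma> :: "'x::euclidean_space \<Rightarrow> 'z::euclidean_space \<Rightarrow> 'w::euclidean_space set"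
  assumes "polyhedral_sv D \<Gamma>"
    and "\<forall>\<xi>\<in>D. \<forall>\<gamma>>0. \<forall>z. \<Gamma> \<xi> (\<gamma> *\<^sub>R z) = (\<lambda>\<eta>. \<gamma> *\<^sub>R \<eta>) ` \<Gamma> \<xi> z"
    and "\<xi>b \<in> D"
  obtains \<epsilon> where "\<epsilon> > 0" "\<And>\<xi> z z'. \<xi> \<in> D \<Longrightarrow> (\<xi>, z') \<in> cball (\<xi>b, z) \<epsilon> \<Longrightarrow> \<Gamma> \<xi> z' \<subseteq> \<Gamma> \<xi>b z'"
proof -
  obtain e where "e > 0" and e: "\<And>\<xi>. dist \<xi> \<xi>b < e \<Longrightarrow> \<xi> \<in> D \<Longrightarrow> \<Gamma> \<xi> z' \<subseteq> \<Gamma> \<xi>b z'" for z'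
    using polyhedral_sv_eventually_subset[OF assms] unfolding eventually_nhds_metric by blast
  have "\<Gamma> \<xi> z' \<subseteq> \<Gamma> \<xi>b z'" if "\<xi> \<in> D" "(\<xi>, z') \<in> cball (\<xi>b, z) (e / 2)" for \<xi> z z'
  proof (rule e[OF _ that(1)])
    have "dist \<xi> \<xi>b \<le> dist (\<xi>, z') (\<xi>b, z)"
      using dist_fst_le[of "(\<xi>, z')" "(\<xi>b, z)"] by simp
    then show "dist \<xi> \<xi>b < e"
      using that(2) \<open>e > 0\<close> by (simp add: dist_commute)
  qed
  then show thesis
    using that[of "e / 2"] \<open>e > 0\<close> by simp
qed

theorem proposition1:
  fixes U D :: "((real^'n) \<times> (real^'p)) set"
    and \<Gamma> :: "(real^'n) \<times> (real^'p) \<Rightarrow> real^'m \<Rightarrow> (real^'q) set"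
    and A :: "(real^'n) \<times> (real^'p) \<Rightarrow> real^'m^'q"
  assumes "open U" and "D \<subseteq> U" and "D \<noteq> {}"
    and "\<forall>\<xi>\<in>D. \<forall>\<gamma>>0. \<forall>z. \<Gamma> \<xi> (\<gamma> *\<^sub>R z) = (\<lambda>\<eta>. \<gamma> *\<^sub>R \<eta>) ` \<Gamma> \<xi> z"
    and "polyhedral_sv D \<Gamma>"
  shows "outer_semicontinuous_sv D \<Gamma> \<and>
    (\<forall>\<xi>b\<in>D.
       closed ((\<lambda>z. A \<xi>b *v z) ` dom_sv (\<Gamma> \<xi>b)) \<and>
       (\<exists>c\<ge>0. \<forall>z\<in>{z \<in> sphere 0 1 \<inter> dom_sv (\<Gamma> \<xi>b). 0 \<in> (\<lambda>h. A \<xi>b *v z + h) ` \<Gamma> \<xi>b z}.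
          \<exists>\<epsilon>>0. \<exists>\<delta>>0. \<forall>\<xi> z'. (\<xi>, z') \<in> (D \<times> sphere 0 1) \<inter> cball (\<xi>b, z) \<epsilon> \<longrightarrow>
             \<Gamma> \<xi> z' \<inter> cball 0 \<delta> \<subseteq>
               {a + b | a b. a \<in> \<Gamma> \<xi>b z' \<and> b \<in> cball 0 (c * norm (\<xi> - \<xi>b))}))"
proof (intro conjI ballI)
  show "outer_semicontinuous_sv D \<Gamma>"
    using assms(5) by (intro closed_graph_imp_outer_semicontinuous_sv polyhedral_sv_imp_closed_graph)
  fix \<xi>b assume "\<xi>b \<in> D"
  show "closed ((\<lambda>z. A \<xi>b *v z) ` dom_sv (\<Gamma> \<xi>b))"
    by (rule closed_linear_image_dom_sv[OF assms(5) \<open>\<xi>b \<in> D\<close> matrix_vector_mul_linear])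
  obtain \<epsilon> where "\<epsilon> > 0"
    and \<epsilon>: "\<And>\<xi> z z'. \<xi> \<in> D \<Longrightarrow> (\<xi>, z') \<in> cball (\<xi>b, z) \<epsilon> \<Longrightarrow> \<Gamma> \<xi> z' \<subseteq> \<Gamma> \<xi>b z'"
    using polyhedral_sv_locally_subset[OF assms(5,4) \<open>\<xi>b \<in> D\<close>] by blast
  have incl: "\<forall>\<xi> z'. (\<xi>, z') \<in> (D \<times> sphere 0 1) \<inter> cball (\<xi>b, z) \<epsilon> \<longrightarrow>
      \<Gamma> \<xi> z' \<subseteq> {a + b | a b. a \<in> \<Gamma> \<xi>b z' \<and> b \<in> cball 0 (0 * norm (\<xi> - \<xi>b))}" for z
    using \<epsilon> by force
  show "\<exists>c\<ge>0. \<forall>z\<in>{z \<in> sphere 0 1 \<inter> dom_sv (\<Gamma> \<xi>b). 0 \<in> (\<lambda>h. A \<xi>b *v z + h) ` \<Gamma> \<xi>b z}.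
      \<exists>\<epsilon>>0. \<exists>\<delta>>0. \<forall>\<xi> z'. (\<xi>, z') \<in> (D \<times> sphere 0 1) \<inter> cball (\<xi>b, z) \<epsilon> \<longrightarrow>
        \<Gamma> \<xi> z' \<inter> cball 0 \<delta> \<subseteq> {a + b | a b. a \<in> \<Gamma> \<xi>b z' \<and> b \<in> cball 0 (c * norm (\<xi> - \<xi>b))}"
    \<comment> \<open>\<open>exI[of _ \<epsilon>]\<close> also chooses \<open>\<delta> = \<epsilon>\<close>; any \<open>\<delta> > 0\<close> would do\<close>
    by (rule exI[of _ 0], intro conjI order_refl ballI exI[of _ \<epsilon>] \<open>\<epsilon> > 0\<close>)
      (use incl in blast)
qed

end
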